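(* In any execution of the algorithm described in the context, all non-faulty processes that decide decide the same value; i.e., no two non-faulty processes decide different values.
   Context: Model. There are $n$ processes $p_1,\dots,p_n$ ($i$ is the index of $p_i$) communicating over an asynchronous, reliable, point-to-point network: every pair of processes is connected by a channel, message delays are finite but unbounded, and the network does not lose, duplicate, modify or create messages. "Broadcast" means sending the message to every process (including oneself). Messages are signed with unforgeable digital signatures ($\langle m\rangle_j$ denotes message $m$ signed by $p_j$); malformed messages or messages with invalid signatures are ignored. Up to $t$ processes are Byzantine (faulty) and may behave arbitrarily and collude, but cannot forge signatures of other processes; the remaining processes are non-faulty and follow the algorithm. It is assumed that $t<n/3$. Algorithm. Messages are of the form $\mathrm{AUX}[r](v)$ with round $r\in\mathbb{N}$ and $v\in\{0,1\}$, sent as a pair $(\langle \mathrm{AUX}[r](v)\rangle_j,\mathit{proofs})$ where $\mathit{proofs}$ is a set of signed AUX messages. The predicate $\mathsf{is\_valid}(r,est,\mathit{proofs})$ is: if $r=0$ return true; if $r=1$ return true iff $\mathit{proofs}$ contains signed $\mathrm{AUX}[0](est)$ messages from $t+1$ different processes; otherwise let $b=(r-1)\bmod 2$; if $est=b$, return true iff ($r=2$ and $\mathit{proofs}$ contains signed $\mathrm{AUX}[0](b)$ from $t+1$ different processes) or ($\mathit{proofs}$ contains signed $\mathrm{AUX}[r-2](b)$ from $n-t$ different processes); if $est\neq b$, return true iff $\mathit{proofs}$ contains signed $\mathrm{AUX}[r-1](\neg b)$ from $n-t$ different processes. Each process $p_i$ with proposal $v_i$ keeps a round counter $r_i$, a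 set $\mathit{aux\_values}_i$ of signed AUX messages, and timers indexed by naturals (timers $2r$ and $2r+1$ belong to round $r$; starting an already started or expired timer does nothing). It sets $r_i:=0$, $\mathit{aux\_values}_i:=\emptyset$, broadcasts $(\langle\mathrm{AUX}[0](v_i)\rangle_i,\emptyset)$, then repeats forever: (1) $r_i:=r_i+1$; (2) if $i=r_i\bmod n$ (coordinator), run Broadcast; (3) start timer $2r_i$ and wait until it expires; (4) if $i\ne r_i\bmod n$, run Broadcast; (5) wait until $\mathit{aux\_values}_i$ contains round-$r_i$ AUX messages from $n-t$ different processes; (6) start timer $2r_i+1$ and wait until it expires; (7) with $b_i=r_i\bmod 2$, if $\mathit{aux\_values}_i$ contains $\mathrm{AUX}[r_i](b_i)$ from $n-t$ different processes, decide $b_i$ (if not yet decided); a process decides in round $r$ if it decides at this step with $r_i=r$. Broadcast: let $\mathit{values}_i$ be the set of $v\in\{0,1\}$ such that $\mathsf{is\_valid}(r_i,v,S)$ holds for some $S\subseteq\mathit{aux\_values}_i$; let $bv=(r_i+1)\bmod 2$; if $p_i$ received from $p_{r_i\bmod n}$ a message $(\langle\mathrm{AUX}[r_i](p)\rangle_{r_i\bmod n},\cdot)$ with $p\in\mathit{values}_i$ then $est_i:=p$, else if $bv\in\mathit{values}_i$ then $est_i:=bv$, else $est_i:=\neg bv$; choose $\mathit{proofs}\subseteq\mathit{aux\_values}_i$ with $\mathsf{is\_valid}(r_i,est_i,\mathit{proofs})$ and broadcast $(\langle\mathrm{AUX}[r_i](est_i)\rangle_i,\mathit{proofs})$. On receiving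 $(\langle\mathrm{AUX}[r_j](est_j)\rangle_j,\mathit{proofs})$: if $\mathsf{is\_valid}(r_j,est_j,\mathit{proofs})$, add the signed message and the messages of $\mathit{proofs}$ needed to satisfy the predicate to $\mathit{aux\_values}_i$ (such messages are called valid). Then let $\rho_i$ be the largest round for which $\mathit{aux\_values}_i$ contains messages from $t+1$ different processes, and set every timer with index $\le 2\rho_i$ to expired. *)

theory Defs
  imports Main "HOL-Library.Multiset"
begin

text \<open>A signed message AUX[r](v) signed by process signer.  Processes are 1..n,
  values are 0 and 1 (encoded as naturals).\<close>
datatype smsg = Aux (signer: nat) (rnd: nat) (val: nat)

text \<open>A network message: (channel sender, receiver, signed head, proofs).\<close>
type_synonym msg = "nat \<times> nat \<times> smsg \<times> smsg set"

definition neg :: "nat \<Rightarrow> nat" where "neg v = 1 - v"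

definition senders :: "smsg set \<Rightarrow> nat \<Rightarrow> nat \<Rightarrow> nat set" where
  "senders S r v = {j. Aux j r v \<in> S}"

definition round_senders :: "smsg set \<Rightarrow> nat \<Rightarrow> nat set" where
  "round_senders S r = {j. \<exists>v. Aux j r v \<in> S}"

definition is_valid :: "nat \<Rightarrow> nat \<Rightarrow> nat \<Rightarrow> nat \<Rightarrow> smsg set \<Rightarrow> bool" where
  "is_valid n t r est proofs =
     (if r = 0 then True
      else if r = 1 then card (senders proofs 0 est) \<ge> t + 1
      else (let b = (r - 1) mod 2 in
            if est = b then
              (r = 2 \<and> card (senders proofs 0 b) \<ge> t + 1) \<or>
              card (senders proofs (r - 2) b) \<ge> n - t
            else card (senders proofs (r - 1) (neg b)) \<ge> n - t))"

definition wf_smsg :: "nat \<Rightarrow> smsg \<Rightarrow> bool" where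
  "wf_smsg n m = (signer m \<in> {1..n} \<and> val m \<le> 1)"

datatype pcv = Init | Top | WaitT1 | WaitQ | WaitT2
datatype tst = Idle | Running | Expired

record lst =
  rr    :: nat
  aux   :: "smsg set"
  pc    :: pcv
  timer :: "nat \<Rightarrow> tst"
  rcvd  :: "(nat \<times> smsg) set"  \<comment> \<open>(channel sender, signed head) of every message received\<close>
  dec   :: "nat option"

record gst =
  loc :: "nat \<Rightarrow> lst"
  net :: "msg multiset"
  sgd :: "smsg set"            \<comment> \<open>messages signed so far by non-faulty processes\<close>

definition init_lst :: lst where
  "init_lst = \<lparr>rr = 0, aux = {}, pc = Init, timer = (\<lambda>_. Idle), rcvd = {}, dec = None\<rparr>"

definition init_gst :: gst where
  "init_gst = \<lparr>loc = (\<lambda>_. init_lst), net = {#}, sgd = {}\<rparr>"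

definition start_timer :: "nat \<Rightarrow> (nat \<Rightarrow> tst) \<Rightarrow> (nat \<Rightarrow> tst)" where
  "start_timer k tm = (if tm k = Idle then tm(k := Running) else tm)"

text \<open>Set to expired every timer with index \<le> 2 \<rho>, \<rho> the largest round for which
  aux contains messages from t+1 different processes (written without Max).\<close>
definition expire_timers :: "nat \<Rightarrow> smsg set \<Rightarrow> (nat \<Rightarrow> tst) \<Rightarrow> (nat \<Rightarrow> tst)" where
  "expire_timers t S tm =
     (\<lambda>k. if \<exists>r'. card (round_senders S r') \<ge> t + 1 \<and> k \<le> 2 * r' then Expired else tm k)"

definition vals :: "nat \<Rightarrow> nat \<Rightarrow> lst \<Rightarrow> nat set" where
  "vals n t s = {v. v \<le> 1 \<and> (\<exists>S \<subseteq> aux s. is_valid n t (rr s) v S)}"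

text \<open>Choice of est_i in procedure Broadcast.\<close>
definition est_ok :: "nat \<Rightarrow> nat \<Rightarrow> lst \<Rightarrow> nat \<Rightarrow> bool" where
  "est_ok n t s e =
     (let c = rr s mod n; bv = (rr s + 1) mod 2 in
      if \<exists>p. (c, Aux c (rr s) p) \<in> rcvd s \<and> p \<in> vals n t s
      then (c, Aux c (rr s) e) \<in> rcvd s \<and> e \<in> vals n t s
      else if bv \<in> vals n t s then e = bv else e = neg bv)"

definition bmsgs :: "nat \<Rightarrow> nat \<Rightarrow> smsg \<Rightarrow> smsg set \<Rightarrow> msg multiset" where
  "bmsgs n i m P = mset (map (\<lambda>k. (i, k, m, P)) [1..<Suc n])"

text \<open>Reachable global states, for n processes, resilience parameter t,
  set F of faulty processes and proposals v.\<close>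
inductive reachable :: "nat \<Rightarrow> nat \<Rightarrow> nat set \<Rightarrow> (nat \<Rightarrow> nat) \<Rightarrow> gst \<Rightarrow> bool"
  for n t F v where
  init: "reachable n t F v init_gst"
| start: "\<lbrakk> reachable n t F v s; i \<in> {1..n}; i \<notin> F; pc (loc s i) = Init \<rbrakk> \<Longrightarrow>
    reachable n t F v
      (s\<lparr> loc := (loc s)(i := (loc s i)\<lparr>rr := 0, aux := {}, pc := Top\<rparr>),
          net := net s + bmsgs n i (Aux i 0 (v i)) {},
          sgd := insert (Aux i 0 (v i)) (sgd s) \<rparr>)"
| top_coord: "\<lbrakk> reachable n t F v s; i \<in> {1..n}; i \<notin> F; pc (loc s i) = Top;
    ls = (loc s i)\<lparr>rr := Suc (rr (loc s i))\<rparr>; i = rr ls mod n;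
    est_ok n t ls e; P \<subseteq> aux ls; is_valid n t (rr ls) e P \<rbrakk> \<Longrightarrow>
    reachable n t F v
      (s\<lparr> loc := (loc s)(i := ls\<lparr>timer := start_timer (2 * rr ls) (timer ls), pc := WaitT1\<rparr>),
          net := net s + bmsgs n i (Aux i (rr ls) e) P,
          sgd := insert (Aux i (rr ls) e) (sgd s) \<rparr>)"
| top_other: "\<lbrakk> reachable n t F v s; i \<in> {1..n}; i \<notin> F; pc (loc s i) = Top;
    ls = (loc s i)\<lparr>rr := Suc (rr (loc s i))\<rparr>; i \<noteq> rr ls mod n \<rbrakk> \<Longrightarrow>
    reachable n t F v
      (s\<lparr> loc := (loc s)(i := ls\<lparr>timer := start_timer (2 * rr ls) (timer ls), pc := WaitT1\<rparr>) \<rparr>)"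
| t1_coord: "\<lbrakk> reachable n t F v s; i \<in> {1..n}; i \<notin> F; pc (loc s i) = WaitT1;
    ls = loc s i; timer ls (2 * rr ls) = Expired; i = rr ls mod n \<rbrakk> \<Longrightarrow>
    reachable n t F v (s\<lparr> loc := (loc s)(i := ls\<lparr>pc := WaitQ\<rparr>) \<rparr>)"
| t1_other: "\<lbrakk> reachable n t F v s; i \<in> {1..n}; i \<notin> F; pc (loc s i) = WaitT1;
    ls = loc s i; timer ls (2 * rr ls) = Expired; i \<noteq> rr ls mod n;
    est_ok n t ls e; P \<subseteq> aux ls; is_valid n t (rr ls) e P \<rbrakk> \<Longrightarrow>
    reachable n t F v
      (s\<lparr> loc := (loc s)(i := ls\<lparr>pc := WaitQ\<rparr>),
          net := net s + bmsgs n i (Aux i (rr ls) e) P,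
          sgd := insert (Aux i (rr ls) e) (sgd s) \<rparr>)"
| quorum: "\<lbrakk> reachable n t F v s; i \<in> {1..n}; i \<notin> F; pc (loc s i) = WaitQ;
    ls = loc s i; card (round_senders (aux ls) (rr ls)) \<ge> n - t \<rbrakk> \<Longrightarrow>
    reachable n t F v
      (s\<lparr> loc := (loc s)(i := ls\<lparr>timer := start_timer (2 * rr ls + 1) (timer ls), pc := WaitT2\<rparr>) \<rparr>)"
| decide: "\<lbrakk> reachable n t F v s; i \<in> {1..n}; i \<notin> F; pc (loc s i) = WaitT2;
    ls = loc s i; timer ls (2 * rr ls + 1) = Expired; b = rr ls mod 2 \<rbrakk> \<Longrightarrow>
    reachable n t F v
      (s\<lparr> loc := (loc s)(i := ls\<lparr>pc := Top,
             dec := (if dec ls = None \<and> card (senders (aux ls) (rr ls) b) \<ge> n - t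
                     then Some b else dec ls)\<rparr>) \<rparr>)"
| timeout: "\<lbrakk> reachable n t F v s; i \<in> {1..n}; i \<notin> F; timer (loc s i) k = Running \<rbrakk> \<Longrightarrow>
    reachable n t F v
      (s\<lparr> loc := (loc s)(i := (loc s i)\<lparr>timer := (timer (loc s i))(k := Expired)\<rparr>) \<rparr>)"
| receive: "\<lbrakk> reachable n t F v s; i \<in> {1..n}; i \<notin> F; (j, i, m, P) \<in># net s;
    ls = loc s i;
    A = (if is_valid n t (rnd m) (val m) P then {m} \<union> S else {});
    is_valid n t (rnd m) (val m) P \<longrightarrow> S \<subseteq> P \<and> is_valid n t (rnd m) (val m) S \<rbrakk> \<Longrightarrow>
    reachable n t F v
      (s\<lparr> loc := (loc s)(i := ls\<lparr>rcvd := insert (j, m) (rcvd ls), aux := aux ls \<union> A,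
             timer := expire_timers t (aux ls \<union> A) (timer ls)\<rparr>),
          net := net s - {#(j, i, m, P)#} \<rparr>)"
| byz_send: "\<lbrakk> reachable n t F v s; j \<in> F; k \<in> {1..n};
    wf_smsg n m; signer m \<in> F \<or> m \<in> sgd s; finite P;
    \<forall>x\<in>P. wf_smsg n x \<and> (signer x \<in> F \<or> x \<in> sgd s) \<rbrakk> \<Longrightarrow>
    reachable n t F v (s\<lparr> net := net s + {#(j, k, m, P)#} \<rparr>)"

end

(* A process decides b = r mod 2 in a round r \<ge> 1 only after collecting n - t signed
   AUX[r](b) messages. A valid AUX[r'](e) with r' \<ge> 3 must carry n - t signed AUX[r0](e)
   messages from round r0 = r' - 1 or r0 = r' - 2, where r0 has the parity opposite to e.
   Hence, by induction on r' > r, a message AUX[r'](\<not>b) signed by a non-faulty process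
   would lead back to n - t signatures of AUX[r](\<not>b); this quorum meets the deciding
   quorum of AUX[r](b) in a non-faulty process, which signs only one value per round.
   So no non-faulty process ever signs \<not>b after round r, and every later quorum, which
   contains a non-faulty signer, certifies b. *)
theory Submission
  imports Defs
begin

(* AUX[2](1) is the only message of a round \<ge> 2 that may instead be justified by t + 1
   proposals of round 0. *)
lemma is_valid_justified:
  assumes "is_valid n t r e P" "e \<le> 1" "2 \<le> r" "r = 2 \<Longrightarrow> e = 0"
  obtains r0 where "r - 2 \<le> r0" "r0 < r" "e = Suc r0 mod 2" "n - t \<le> card (senders P r0 e)"
proof (cases "e = (r - 1) mod 2")
  case True
  then have "r \<noteq> 2" using assms(4) by auto
  then have "n - t \<le> card (senders P (r - 2) e)"
    using assms(1,3) True by (auto simp: is_valid_def Let_def)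
  then show ?thesis using that[of "r - 2"] True assms(3) by (simp add: mod2_eq_if)
next
  case False
  then have "e = neg ((r - 1) mod 2)" using assms(2) by (auto simp: neg_def mod2_eq_if)
  then have "n - t \<le> card (senders P (r - 1) e)"
    using assms(1,3) False by (auto simp: is_valid_def Let_def)
  moreover have "e = Suc (r - 1) mod 2"
    using False assms(2,3) by (auto simp: mod2_eq_if split: if_splits)
  ultimately show ?thesis using that[of "r - 1"] assms(3) by simp
qed

lemma quorums_share_nonfaulty:
  assumes "A \<subseteq> {1..n}" "B \<subseteq> {1..n}" "n - t \<le> card A" "n - t \<le> card B"
    and "finite F" "card F \<le> t" "3 * t < n"
  obtains k where "k \<in> A" "k \<in> B" "k \<notin> F"
proof -
  have "finite A" "finite B" using assms(1,2) finite_subset by blast+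
  have "card (A \<union> B) \<le> n" using assms(1,2) card_mono[of "{1..n}" "A \<union> B"] by auto
  then have "card F < card (A \<inter> B)"
    using card_Un_Int[OF \<open>finite A\<close> \<open>finite B\<close>] assms(3,4,6,7) by linarith
  then have "\<not> A \<inter> B \<subseteq> F" using card_mono[OF assms(5)] by (meson leD)
  then show ?thesis using that by blast
qed

(* S is the set of messages signed by non-faulty processes so far; by unforgeability these
   are the only messages with a non-faulty signer that can exist. *)
definition genuine :: "nat \<Rightarrow> nat set \<Rightarrow> smsg set \<Rightarrow> smsg \<Rightarrow> bool" where
  "genuine n F S m \<longleftrightarrow> signer m \<in> {1..n} \<and> (signer m \<in> F \<or> m \<in> S)"

definition genuine_msg :: "nat \<Rightarrow> nat set \<Rightarrow> smsg set \<Rightarrow> msg \<Rightarrow> bool" where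
  "genuine_msg n F S x \<longleftrightarrow>
     (case x of (_, _, m, P) \<Rightarrow> genuine n F S m \<and> (\<forall>y\<in>P. genuine n F S y))"

definition justified :: "nat \<Rightarrow> nat \<Rightarrow> nat set \<Rightarrow> smsg set \<Rightarrow> smsg \<Rightarrow> bool" where
  "justified n t F S m \<longleftrightarrow> (\<exists>P. is_valid n t (rnd m) (val m) P \<and> (\<forall>y\<in>P. genuine n F S y))"

definition has_quorum :: "nat \<Rightarrow> nat \<Rightarrow> nat set \<Rightarrow> smsg set \<Rightarrow> nat \<Rightarrow> nat \<Rightarrow> bool" where
  "has_quorum n t F S r b \<longleftrightarrow>
     (\<exists>A \<subseteq> {1..n}. n - t \<le> card A \<and> (\<forall>k\<in>A. genuine n F S (Aux k r b)))"

definition certified_value :: "nat \<Rightarrow> nat \<Rightarrow> nat set \<Rightarrow> smsg set \<Rightarrow> nat \<Rightarrow> bool" where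
  "certified_value n t F S b \<longleftrightarrow> (\<exists>r\<ge>1. b = r mod 2 \<and> has_quorum n t F S r b)"

definition one_value_per_round :: "smsg set \<Rightarrow> bool" where
  "one_value_per_round S \<longleftrightarrow>
     (\<forall>m\<in>S. \<forall>m'\<in>S. signer m = signer m' \<longrightarrow> rnd m = rnd m' \<longrightarrow> val m = val m')"

lemma genuine_insert: "genuine n F S m \<Longrightarrow> genuine n F (insert x S) m"
  by (auto simp: genuine_def)

lemma genuine_msg_insert: "genuine_msg n F S y \<Longrightarrow> genuine_msg n F (insert x S) y"
  by (auto simp: genuine_msg_def genuine_def)

lemma genuine_broadcast:
  assumes "i \<in> {1..n}" "\<forall>y\<in>P. genuine n F S y"
  shows "\<forall>x\<in>#bmsgs n i (Aux i r e) P. genuine_msg n F (insert (Aux i r e) S) x"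
  using assms by (auto simp: bmsgs_def genuine_msg_def genuine_def)

lemma justified_insert: "justified n t F S m \<Longrightarrow> justified n t F (insert x S) m"
  by (auto simp: justified_def intro: genuine_insert)

lemma has_quorumI:
  assumes "\<forall>m\<in>P. genuine n F S m" "n - t \<le> card (senders P r b)"
  shows "has_quorum n t F S r b"
proof -
  have "senders P r b \<subseteq> {1..n}" using assms(1) by (auto simp: senders_def genuine_def)
  then show ?thesis unfolding has_quorum_def using assms by (auto simp: senders_def)
qed

lemma has_quorum_insert: "has_quorum n t F S r b \<Longrightarrow> has_quorum n t F (insert x S) r b"
  unfolding has_quorum_def by (meson genuine_insert)

lemma certified_value_insert:
  "certified_value n t F S b \<Longrightarrow> certified_value n t F (insert x S) b"
  unfolding certified_value_def using has_quorum_insert by blast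

lemma one_value_per_roundD:
  "one_value_per_round S \<Longrightarrow> Aux k r b \<in> S \<Longrightarrow> Aux k r b' \<in> S \<Longrightarrow> b = b'"
  unfolding one_value_per_round_def by force

lemma quorums_share_signer:
  assumes "has_quorum n t F S r b" "has_quorum n t F S r' b'"
    and "finite F" "card F \<le> t" "3 * t < n"
  obtains k where "Aux k r b \<in> S" "Aux k r' b' \<in> S"
proof -
  obtain A B where "A \<subseteq> {1..n}" "n - t \<le> card A" "\<forall>k\<in>A. genuine n F S (Aux k r b)"
    "B \<subseteq> {1..n}" "n - t \<le> card B" "\<forall>k\<in>B. genuine n F S (Aux k r' b')"
    using assms(1,2) unfolding has_quorum_def by blast
  with quorums_share_nonfaulty[OF _ _ _ _ assms(3-5)] show ?thesis
    using that unfolding genuine_def by (metis smsg.sel(1))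
qed

lemma no_opposite_value_after_quorum:
  assumes "3 * t < n" "finite F" "card F \<le> t"
    and justified: "\<forall>m\<in>S. justified n t F S m" and unique: "one_value_per_round S"
    and "1 \<le> r" and quorum: "has_quorum n t F S r (r mod 2)"
  shows "m \<in> S \<Longrightarrow> r < rnd m \<Longrightarrow> val m \<noteq> Suc r mod 2"
proof (induction "rnd m" arbitrary: m rule: less_induct)
  case less
  show ?case
  proof
    assume val: "val m = Suc r mod 2"
    obtain P where P: "is_valid n t (rnd m) (val m) P" "\<forall>y\<in>P. genuine n F S y"
      using justified less.prems(1) unfolding justified_def by blast
    have "val m \<le> 1" "2 \<le> rnd m" using val less.prems(2) assms(6) by simp_all
    moreover have "rnd m = 2 \<Longrightarrow> val m = 0"
      using val less.prems(2) assms(6) by (simp add: le_antisym less_2_cases_iff)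
    ultimately obtain r0 where r0: "rnd m - 2 \<le> r0" "r0 < rnd m" "val m = Suc r0 mod 2"
      "n - t \<le> card (senders P r0 (val m))"
      using is_valid_justified[OF P(1)] by blast
    have later: "has_quorum n t F S r0 (Suc r mod 2)" using has_quorumI[OF P(2) r0(4)] val by simp
    have "r \<le> r0" using r0(1,3) val less.prems(2) by presburger
    then consider "r0 = r" | "r < r0" by linarith
    then show False
    proof cases
      case 1
      obtain k where "Aux k r (r mod 2) \<in> S" "Aux k r (Suc r mod 2) \<in> S"
        using quorums_share_signer[OF quorum later[unfolded 1] assms(2,3,1)] .
      from one_value_per_roundD[OF unique this] show False by presburger
    next
      case 2
      obtain k where "Aux k r0 (Suc r mod 2) \<in> S"
        using quorums_share_signer[OF later later assms(2,3,1)] by blast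
      then show False using less.hyps[of "Aux k r0 (Suc r mod 2)"] r0(2) 2 by simp
    qed
  qed
qed

lemma certified_values_agree:
  assumes "3 * t < n" "finite F" "card F \<le> t"
    and "\<forall>m\<in>S. justified n t F S m" "one_value_per_round S"
    and "certified_value n t F S a" "certified_value n t F S b"
  shows "a = b"
proof -
  have same_parity: "r' mod 2 = r mod 2"
    if r: "1 \<le> r" "has_quorum n t F S r (r mod 2)" "has_quorum n t F S r' (r' mod 2)" "r < r'"
    for r r'
  proof -
    obtain k where "Aux k r' (r' mod 2) \<in> S"
      using quorums_share_signer[OF r(3) r(3) assms(2,3,1)] by blast
    then have "r' mod 2 \<noteq> Suc r mod 2"
      using no_opposite_value_after_quorum[OF assms(1-5) r(1,2)] r(4) by fastforce
    then show ?thesis by presburger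
  qed
  obtain r r' where "1 \<le> r" "a = r mod 2" "has_quorum n t F S r a"
    "1 \<le> r'" "b = r' mod 2" "has_quorum n t F S r' b"
    using assms(6,7) unfolding certified_value_def by blast
  then show ?thesis using same_parity by (metis linorder_neqE_nat)
qed

lemma reachable_genuine:
  assumes "reachable n t F v s"
  shows "(\<forall>i. \<forall>m\<in>aux (loc s i). genuine n F (sgd s) m) \<and> (\<forall>x\<in>#net s. genuine_msg n F (sgd s) x)"
  using assms
proof (induction rule: reachable.induct)
  case (top_coord s i ls e P)
  have "\<forall>y\<in>P. genuine n F (sgd s) y" using top_coord.IH top_coord.hyps(5,8) by auto
  note sent = genuine_broadcast[OF top_coord.hyps(2) this, of "rr ls" e]
  show ?case
    using top_coord.IH top_coord.hyps(5) sent by (auto intro: genuine_insert genuine_msg_insert)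
next
  case (t1_coord s i ls)
  show ?case using t1_coord.IH t1_coord.hyps(5) by auto
next
  case (t1_other s i ls e P)
  have "\<forall>y\<in>P. genuine n F (sgd s) y" using t1_other.IH t1_other.hyps(5,9) by auto
  note sent = genuine_broadcast[OF t1_other.hyps(2) this, of "rr ls" e]
  show ?case
    using t1_other.IH t1_other.hyps(5) sent by (auto intro: genuine_insert genuine_msg_insert)
next
  case (receive s i j m P ls A S)
  have "genuine_msg n F (sgd s) (j, i, m, P)" using receive.IH receive.hyps(4) by blast
  then have "\<forall>y\<in>A. genuine n F (sgd s) y" using receive.hyps(6,7) by (auto simp: genuine_msg_def)
  then show ?case using receive.IH receive.hyps(5) by (auto dest: in_diffD)
next
  case (byz_send s j k m P)
  show ?case
    using byz_send.IH byz_send.hyps(4,5,7) by (auto simp: genuine_msg_def genuine_def wf_smsg_def)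
qed (auto simp: init_gst_def init_lst_def genuine_msg_def genuine_def bmsgs_def)

lemma reachable_aux_genuine:
  "reachable n t F v s \<Longrightarrow> m \<in> aux (loc s i) \<Longrightarrow> genuine n F (sgd s) m"
  using reachable_genuine by blast

lemma reachable_justified:
  assumes "reachable n t F v s"
  shows "\<forall>m\<in>sgd s. justified n t F (sgd s) m"
  using assms
proof (induction rule: reachable.induct)
  case (start s i)
  have "justified n t F (sgd s) (Aux i 0 (v i))"
    unfolding justified_def by (rule exI[of _ "{}"]) (simp add: is_valid_def)
  then show ?case using start.IH by (auto intro: justified_insert)
next
  case (top_coord s i ls e P)
  have "justified n t F (sgd s) (Aux i (rr ls) e)"
    using top_coord.hyps(1,5,8,9) reachable_aux_genuine unfolding justified_def by fastforce
  then show ?case using top_coord.IH by (auto intro: justified_insert)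
next
  case (t1_other s i ls e P)
  have "justified n t F (sgd s) (Aux i (rr ls) e)"
    using t1_other.hyps(1,5,9,10) reachable_aux_genuine unfolding justified_def by fastforce
  then show ?case using t1_other.IH by (auto intro: justified_insert)
next
  case (t1_coord s i ls)
  show ?case using t1_coord.IH by simp
qed (auto simp: init_gst_def)

(* The first round in which process i, in local state l, has not signed yet: the coordinator
   of round rr l signs in step (2) before waiting, every other process in step (4). *)
definition sign_frontier :: "nat \<Rightarrow> nat \<Rightarrow> lst \<Rightarrow> nat" where
  "sign_frontier n i l =
     (if pc l = Init then 0
      else if pc l = WaitT1 \<and> i \<noteq> rr l mod n then rr l
      else Suc (rr l))"

definition signed_below :: "nat \<Rightarrow> (nat \<Rightarrow> lst) \<Rightarrow> smsg set \<Rightarrow> bool" where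
  "signed_below n L S \<longleftrightarrow> (\<forall>m\<in>S. rnd m < sign_frontier n (signer m) (L (signer m)))"

lemma frontier_advance_preserves:
  assumes "signed_below n L S \<and> one_value_per_round S"
    and "sign_frontier n i (L i) \<le> sign_frontier n i l"
  shows "signed_below n (L(i := l)) S \<and> one_value_per_round S"
  using assms unfolding signed_below_def by (metis fun_upd_apply order_less_le_trans)

lemma signing_at_frontier_preserves:
  assumes "signed_below n L S \<and> one_value_per_round S"
    and "rnd x = sign_frontier n (signer x) (L (signer x))"
    and "sign_frontier n (signer x) (L (signer x)) < sign_frontier n (signer x) l"
  shows "signed_below n (L(signer x := l)) (insert x S) \<and> one_value_per_round (insert x S)"
  using assms unfolding signed_below_def one_value_per_round_def
  by (smt (verit, ccfv_threshold) fun_upd_apply insert_iff order.strict_trans less_irrefl)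

lemma reachable_signing:
  assumes "reachable n t F v s"
  shows "signed_below n (loc s) (sgd s) \<and> one_value_per_round (sgd s)"
  using assms
proof (induction rule: reachable.induct)
  case init
  then show ?case by (simp add: init_gst_def signed_below_def one_value_per_round_def)
next
  case (start s i)
  let ?x = "Aux i 0 (v i)"
  have "rnd ?x = sign_frontier n (signer ?x) (loc s (signer ?x))"
    "sign_frontier n (signer ?x) (loc s (signer ?x))
       < sign_frontier n (signer ?x) ((loc s i)\<lparr>rr := 0, aux := {}, pc := Top\<rparr>)"
    using start.hyps(4) by (simp_all add: sign_frontier_def)
  from signing_at_frontier_preserves[OF start.IH this] show ?case by (simp add: fun_upd_def)
next
  case (top_coord s i ls e P)
  let ?x = "Aux i (rr ls) e"
  have "rr ls = Suc (rr (loc s i))" using top_coord.hyps(5) by simp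
  then have coordinator: "Suc (rr (loc s i)) mod n = i" using top_coord.hyps(6) by metis
  have "rnd ?x = sign_frontier n (signer ?x) (loc s (signer ?x))"
    "sign_frontier n (signer ?x) (loc s (signer ?x))
       < sign_frontier n (signer ?x) (ls\<lparr>timer := start_timer (2 * rr ls) (timer ls), pc := WaitT1\<rparr>)"
    using top_coord.hyps(4,5) coordinator by (simp_all add: sign_frontier_def)
  from signing_at_frontier_preserves[OF top_coord.IH this] show ?case by (simp add: fun_upd_def)
next
  case (top_other s i ls)
  have "sign_frontier n i (loc s i)
      \<le> sign_frontier n i (ls\<lparr>timer := start_timer (2 * rr ls) (timer ls), pc := WaitT1\<rparr>)"
    using top_other.hyps(4,5,6) by (simp add: sign_frontier_def)
  from frontier_advance_preserves[OF top_other.IH this] show ?case by (simp add: fun_upd_def)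
next
  case (t1_coord s i ls)
  have coordinator: "rr (loc s i) mod n = i" using t1_coord.hyps(5,7) by metis
  have "sign_frontier n i (loc s i) \<le> sign_frontier n i (ls\<lparr>pc := WaitQ\<rparr>)"
    using t1_coord.hyps(4,5) coordinator by (simp add: sign_frontier_def)
  from frontier_advance_preserves[OF t1_coord.IH this] show ?case by (simp add: fun_upd_def)
next
  case (t1_other s i ls e P)
  let ?x = "Aux i (rr ls) e"
  have "rnd ?x = sign_frontier n (signer ?x) (loc s (signer ?x))"
    "sign_frontier n (signer ?x) (loc s (signer ?x)) < sign_frontier n (signer ?x) (ls\<lparr>pc := WaitQ\<rparr>)"
    using t1_other.hyps(4,5,7) by (simp_all add: sign_frontier_def)
  from signing_at_frontier_preserves[OF t1_other.IH this] show ?case by (simp add: fun_upd_def)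
next
  case (quorum s i ls)
  have "sign_frontier n i (loc s i)
      \<le> sign_frontier n i (ls\<lparr>timer := start_timer (2 * rr ls + 1) (timer ls), pc := WaitT2\<rparr>)"
    using quorum.hyps(4,5) by (simp add: sign_frontier_def)
  from frontier_advance_preserves[OF quorum.IH this] show ?case by (simp add: fun_upd_def)
next
  case (decide s i ls b)
  have "sign_frontier n i (loc s i) \<le> sign_frontier n i (ls\<lparr>pc := Top, dec := d\<rparr>)" for d
    using decide.hyps(4,5) by (simp add: sign_frontier_def)
  from frontier_advance_preserves[OF decide.IH this] show ?case by (simp add: fun_upd_def)
next
  case (timeout s i k)
  have "sign_frontier n i (loc s i) \<le> sign_frontier n i ((loc s i)\<lparr>timer := T\<rparr>)" for T
    by (simp add: sign_frontier_def)
  from frontier_advance_preserves[OF timeout.IH this] show ?case by (simp add: fun_upd_def)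
next
  case (receive s i j m P ls A S)
  have "sign_frontier n i (loc s i) \<le> sign_frontier n i (ls\<lparr>rcvd := R, aux := X, timer := T\<rparr>)"
    for R X T
    using receive.hyps(5) by (simp add: sign_frontier_def)
  from frontier_advance_preserves[OF receive.IH this] show ?case by (simp add: fun_upd_def)
next
  case (byz_send s j k m P)
  show ?case using byz_send.IH by simp
qed

lemma reachable_round_positive:
  assumes "reachable n t F v s"
  shows "\<forall>i. pc (loc s i) \<in> {WaitT1, WaitQ, WaitT2} \<longrightarrow> 1 \<le> rr (loc s i)"
  using assms
proof (induction rule: reachable.induct)
  case (top_coord s i ls e P)
  show ?case using top_coord.IH top_coord.hyps(5) by simp
next
  case (t1_coord s i ls)
  show ?case using t1_coord.IH t1_coord.hyps(4,5) by simp
qed (auto simp: init_gst_def init_lst_def)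

lemma reachable_decision_certified:
  assumes "reachable n t F v s"
  shows "\<forall>i b. dec (loc s i) = Some b \<longrightarrow> certified_value n t F (sgd s) b"
  using assms
proof (induction rule: reachable.induct)
  case (decide s i ls b)
  have "1 \<le> rr ls" using reachable_round_positive[OF decide.hyps(1)] decide.hyps(4,5) by simp
  moreover have "has_quorum n t F (sgd s) (rr ls) b"
    if "n - t \<le> card (senders (aux ls) (rr ls) b)"
    using has_quorumI reachable_aux_genuine[OF decide.hyps(1)] decide.hyps(5) that by blast
  ultimately show ?case
    using decide.IH decide.hyps(5,7) by (auto simp: certified_value_def)
next
  case (top_coord s i ls e P)
  show ?case using top_coord.IH top_coord.hyps(5) by (simp add: certified_value_insert)
next
  case (t1_coord s i ls)
  show ?case using t1_coord.IH t1_coord.hyps(5) by simp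
qed (auto simp: init_gst_def init_lst_def intro: certified_value_insert)

theorem lemma3:
  fixes n t :: nat and F :: "nat set" and v :: "nat \<Rightarrow> nat" and s :: gst
  assumes "3 * t < n"
    and "F \<subseteq> {1..n}" and "card F \<le> t"
    and "\<forall>i\<in>{1..n} - F. v i \<le> 1"
    and "reachable n t F v s"
    and "i \<in> {1..n} - F" and "j \<in> {1..n} - F"
    and "dec (loc s i) = Some a" and "dec (loc s j) = Some b"
  shows "a = b"
proof (rule certified_values_agree)
  show "finite F" using assms(2) finite_subset by blast
  show "\<forall>m\<in>sgd s. justified n t F (sgd s) m" using reachable_justified[OF assms(5)] .
  show "one_value_per_round (sgd s)" using reachable_signing[OF assms(5)] by blast
  show "certified_value n t F (sgd s) a" "certified_value n t F (sgd s) b"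
    using reachable_decision_certified[OF assms(5)] assms(8,9) by blast+
qed (use assms(1,3) in auto)

end
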